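(* Let $(\mathcal G,c)$ be a finite connected weighted planar graph and $W\subset\mathcal V\mathcal G$ nonempty. For $x\in\mathcal V\mathcal G$ let $X^x$ be the random walk on $(\mathcal G,c)$ started at $x$ and $\tau_x$ its first hitting time of $W$. Then for all $x,y\in\mathcal V\mathcal G\setminus W$, $$d_{TV}\big(X^x_{\tau_x},X^y_{\tau_y}\big)\le\mathbb P\big(X^x|_{[0,\tau_x]}\text{ does not disconnect }y\text{ from }W\big),$$ where $d_{TV}$ is total variation distance between the laws, and "$X^x|_{[0,\tau_x]}$ disconnects $y$ from $W$" means that every path in $\mathcal G$ from $y$ to $W$ visits some vertex in $\{X^x_0,\dots,X^x_{\tau_x}\}$.
   Context: The random walk on a weighted graph $(\mathcal G,c)$ with positive conductances moves from $x$ to $y$ with probability $c_{xy}/\pi(x)$, where $c_{xy}$ is the total conductance of edges joining $x$ and $y$ and $\pi(x)=\sum_{e\ni x}c_e$. *)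

theory Defs
  imports "HOL-Analysis.Analysis"
begin

text \<open>A finite weighted graph on vertex set V is encoded by the symmetric function
  c x y = total conductance of the edges joining x and y (0 if there is none;
  c x x is the total conductance of loops at x).\<close>

definition weighted_graph :: "'a set \<Rightarrow> ('a \<Rightarrow> 'a \<Rightarrow> real) \<Rightarrow> bool" where
  "weighted_graph V c \<longleftrightarrow> finite V \<and>
     (\<forall>x y. c x y = c y x) \<and> (\<forall>x y. 0 \<le> c x y) \<and>
     (\<forall>x y. c x y \<noteq> 0 \<longrightarrow> x \<in> V \<and> y \<in> V)"

definition adj :: "('a \<Rightarrow> 'a \<Rightarrow> real) \<Rightarrow> 'a \<Rightarrow> 'a \<Rightarrow> bool" where
  "adj c x y \<longleftrightarrow> 0 < c x y"

definition graph_path :: "('a \<Rightarrow> 'a \<Rightarrow> real) \<Rightarrow> 'a list \<Rightarrow> bool" where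
  "graph_path c q \<longleftrightarrow> q \<noteq> [] \<and> (\<forall>i. Suc i < length q \<longrightarrow> adj c (q ! i) (q ! Suc i))"

definition connected_graph :: "'a set \<Rightarrow> ('a \<Rightarrow> 'a \<Rightarrow> real) \<Rightarrow> bool" where
  "connected_graph V c \<longleftrightarrow>
     (\<forall>u\<in>V. \<forall>v\<in>V. \<exists>q. graph_path c q \<and> hd q = u \<and> last q = v)"

text \<open>Planarity: an embedding of the underlying simple graph (loops ignored) in the plane
  \<open>\<complex> = \<real>\<^sup>2\<close>: distinct points for vertices, an arc for each edge \<open>{u,v}\<close> (u \<noteq> v) joining
  the images of its endpoints, passing through no other vertex, and two distinct edges meet
  only in images of common endpoints.\<close>
definition planar_graph :: "'a set \<Rightarrow> ('a \<Rightarrow> 'a \<Rightarrow> real) \<Rightarrow> bool" where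
  "planar_graph V c \<longleftrightarrow>
    (\<exists>(f :: 'a \<Rightarrow> complex) (g :: 'a set \<Rightarrow> real \<Rightarrow> complex).
       inj_on f V \<and>
       (\<forall>u v. u \<noteq> v \<and> adj c u v \<longrightarrow>
          arc (g {u, v}) \<and> {pathstart (g {u, v}), pathfinish (g {u, v})} = {f u, f v} \<and>
          path_image (g {u, v}) \<inter> f ` V = {f u, f v}) \<and>
       (\<forall>u v u' v'. u \<noteq> v \<and> adj c u v \<and> u' \<noteq> v' \<and> adj c u' v' \<and> {u, v} \<noteq> {u', v'} \<longrightarrow>
          path_image (g {u, v}) \<inter> path_image (g {u', v'}) \<subseteq> f ` ({u, v} \<inter> {u', v'})))"

definition stat :: "'a set \<Rightarrow> ('a \<Rightarrow> 'a \<Rightarrow> real) \<Rightarrow> 'a \<Rightarrow> real" where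
  "stat V c x = (\<Sum>y\<in>V. c x y)"

definition trans_prob :: "'a set \<Rightarrow> ('a \<Rightarrow> 'a \<Rightarrow> real) \<Rightarrow> 'a \<Rightarrow> 'a \<Rightarrow> real" where
  "trans_prob V c x y = c x y / stat V c x"

definition traj_prob :: "'a set \<Rightarrow> ('a \<Rightarrow> 'a \<Rightarrow> real) \<Rightarrow> 'a list \<Rightarrow> real" where
  "traj_prob V c p = (\<Prod>i<length p - 1. trans_prob V c (p ! i) (p ! Suc i))"

text \<open>Possible trajectories \<open>X\<^sup>x|_[0,\<tau>_x]\<close> of the walk from x stopped at its hitting time of W:
  start at x, end in W, no earlier visit to W.\<close>
definition stopped_trajs :: "'a set \<Rightarrow> 'a \<Rightarrow> 'a list set" where
  "stopped_trajs W x = {p. p \<noteq> [] \<and> hd p = x \<and> last p \<in> W \<and>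
                          (\<forall>i. Suc i < length p \<longrightarrow> p ! i \<notin> W)}"

text \<open>Law of the hitting position \<open>X\<^sup>x_{\<tau>_x}\<close>: probability that it lies in A.\<close>
definition hit_law :: "'a set \<Rightarrow> ('a \<Rightarrow> 'a \<Rightarrow> real) \<Rightarrow> 'a set \<Rightarrow> 'a \<Rightarrow> 'a set \<Rightarrow> real" where
  "hit_law V c W x A = (\<Sum>\<^sub>\<infinity>p \<in> {p \<in> stopped_trajs W x. last p \<in> A}. traj_prob V c p)"

definition dTV_hit :: "'a set \<Rightarrow> ('a \<Rightarrow> 'a \<Rightarrow> real) \<Rightarrow> 'a set \<Rightarrow> 'a \<Rightarrow> 'a \<Rightarrow> real" where
  "dTV_hit V c W x y = (SUP A\<in>Pow V. \<bar>hit_law V c W x A - hit_law V c W y A\<bar>)"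

definition disconnects :: "('a \<Rightarrow> 'a \<Rightarrow> real) \<Rightarrow> 'a set \<Rightarrow> 'a \<Rightarrow> 'a set \<Rightarrow> bool" where
  "disconnects c S y W \<longleftrightarrow>
     (\<forall>q. graph_path c q \<and> hd q = y \<and> last q \<in> W \<longrightarrow> set q \<inter> S \<noteq> {})"

definition prob_not_disconnect :: "'a set \<Rightarrow> ('a \<Rightarrow> 'a \<Rightarrow> real) \<Rightarrow> 'a set \<Rightarrow> 'a \<Rightarrow> 'a \<Rightarrow> real" where
  "prob_not_disconnect V c W x y =
     (\<Sum>\<^sub>\<infinity>p \<in> {p \<in> stopped_trajs W x. \<not> disconnects c (set p) y W}. traj_prob V c p)"

end

theory Submission
  imports Defs "HOL-Library.Multiset" "HOL-Library.Sublist"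
begin

text \<open>Run the first two steps of Wilson's algorithm from y and then from x: a loop-erased walk
  \<open>\<gamma>\<close> from y to W, then a loop-erased walk \<open>\<eta>\<close> from x to \<open>W \<union> \<gamma>\<close>. Summing over the loops
  that were erased, the weight of such a pair is a product of path weights and of Green's
  functions of shrinking domains; the identity \<open>G_E(a,a) G_{E-a}(b,b) = G_E(b,b) G_{E-b}(a,a)\<close>
  makes this weight invariant under the bijection that, when \<open>\<eta>\<close> ends on \<open>\<gamma>\<close>, continues \<open>\<eta>\<close>
  along \<open>\<gamma>\<close> and cuts \<open>\<gamma>\<close> at the meeting point, and simply exchanges the two walks otherwise.
  The bijection exchanges the roles of x and y, and when \<open>\<eta>\<close> meets \<open>\<gamma>\<close> it keeps the endpoint
  in W of the first walk. Since the endpoint of the loop-erased walk from x is \<open>X\<^sup>x\<^sub>\<tau>\<close>, the two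
  hitting laws differ at most by the weight of the pairs where \<open>\<eta>\<close> avoids \<open>\<gamma>\<close>; then the walk
  from x avoids the path \<open>\<gamma>\<close> from y to W and does not disconnect y from W.\<close>

lemma ennreal_summable_on [simp]: "(f :: 'b \<Rightarrow> ennreal) summable_on A"
  by (rule nonneg_summable_on_complete) simp

lemma ennreal_infsum_cmult_right:
  fixes f :: "'b \<Rightarrow> ennreal"
  shows "(\<Sum>\<^sub>\<infinity>x\<in>A. k * f x) = k * infsum f A"
proof -
  have "(\<Sum>\<^sub>\<infinity>x\<in>A. k * f x) = (SUP F\<in>{F. finite F \<and> F \<subseteq> A}. sum (\<lambda>x. k * f x) F)"
    by (rule nonneg_infsum_complete) simp
  also have "\<dots> = k * (SUP F\<in>{F. finite F \<and> F \<subseteq> A}. sum f F)"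
    by (simp add: sum_distrib_left SUP_mult_left_ennreal)
  also have "(SUP F\<in>{F. finite F \<and> F \<subseteq> A}. sum f F) = infsum f A"
    by (rule nonneg_infsum_complete[symmetric]) simp
  finally show ?thesis .
qed

lemma ennreal_infsum_cmult_left:
  fixes f :: "'b \<Rightarrow> ennreal"
  shows "(\<Sum>\<^sub>\<infinity>x\<in>A. f x * k) = infsum f A * k"
  using ennreal_infsum_cmult_right[of k f A] by (simp add: mult.commute)

lemma ennreal_infsum_mono_set:
  fixes f :: "'b \<Rightarrow> ennreal"
  shows "A \<subseteq> B \<Longrightarrow> infsum f A \<le> infsum f B"
  by (rule infsum_mono_neutral) auto

lemma ennreal_infsum_Sigma_finite:
  fixes f :: "'b \<times> 'c \<Rightarrow> ennreal"
  assumes "finite A"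
  shows "infsum f (Sigma A B) = (\<Sum>a\<in>A. \<Sum>\<^sub>\<infinity>b\<in>B a. f (a, b))"
  using assms
proof (induction A rule: finite_induct)
  case (insert a A)
  have "Sigma (insert a A) B = Pair a ` B a \<union> Sigma A B" by auto
  moreover have "Pair a ` B a \<inter> Sigma A B = {}" using insert by auto
  ultimately have "infsum f (Sigma (insert a A) B) = infsum f (Pair a ` B a) + infsum f (Sigma A B)"
    by (simp add: infsum_Un_disjoint[symmetric])
  also have "infsum f (Pair a ` B a) = (\<Sum>\<^sub>\<infinity>b\<in>B a. f (a, b))"
    by (subst infsum_reindex) (auto simp: inj_on_def o_def)
  finally show ?case using insert by simp
qed simp

lemma ennreal_infsum_Sigma:
  fixes f :: "'b \<times> 'c \<Rightarrow> ennreal"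
  shows "infsum f (Sigma A B) = (\<Sum>\<^sub>\<infinity>a\<in>A. \<Sum>\<^sub>\<infinity>b\<in>B a. f (a, b))"
proof (rule antisym)
  have finite_le: "sum f F \<le> (\<Sum>\<^sub>\<infinity>a\<in>A. \<Sum>\<^sub>\<infinity>b\<in>B a. f (a, b))"
    if F: "finite F" "F \<subseteq> Sigma A B" for F
  proof -
    have "F \<subseteq> Sigma (fst ` F) B" using F by force
    then have "sum f F \<le> infsum f (Sigma (fst ` F) B)"
      using F ennreal_infsum_mono_set[of F _ f] by simp
    also have "\<dots> = (\<Sum>\<^sub>\<infinity>a\<in>fst ` F. \<Sum>\<^sub>\<infinity>b\<in>B a. f (a, b))"
      using F by (simp add: ennreal_infsum_Sigma_finite)
    also have "\<dots> \<le> (\<Sum>\<^sub>\<infinity>a\<in>A. \<Sum>\<^sub>\<infinity>b\<in>B a. f (a, b))"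
      using F by (intro ennreal_infsum_mono_set) auto
    finally show ?thesis .
  qed
  show "infsum f (Sigma A B) \<le> (\<Sum>\<^sub>\<infinity>a\<in>A. \<Sum>\<^sub>\<infinity>b\<in>B a. f (a, b))"
    using nonneg_infsum_complete[where f=f and A="Sigma A B"] finite_le by (auto intro!: SUP_least)
next
  have finite_le: "(\<Sum>a\<in>F. \<Sum>\<^sub>\<infinity>b\<in>B a. f (a, b)) \<le> infsum f (Sigma A B)"
    if F: "finite F" "F \<subseteq> A" for F
    using F by (simp add: ennreal_infsum_Sigma_finite[symmetric] ennreal_infsum_mono_set Sigma_mono)
  show "(\<Sum>\<^sub>\<infinity>a\<in>A. \<Sum>\<^sub>\<infinity>b\<in>B a. f (a, b)) \<le> infsum f (Sigma A B)"
    using nonneg_infsum_complete[where f="\<lambda>a. \<Sum>\<^sub>\<infinity>b\<in>B a. f (a, b)" and A=A] finite_le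
    by (auto intro!: SUP_least)
qed

lemma ennreal_infsum_product:
  fixes f :: "'b \<Rightarrow> ennreal" and g :: "'c \<Rightarrow> ennreal"
  shows "(\<Sum>\<^sub>\<infinity>(a, b)\<in>A \<times> B. f a * g b) = infsum f A * infsum g B"
  by (simp add: ennreal_infsum_Sigma ennreal_infsum_cmult_left ennreal_infsum_cmult_right)

lemma ennreal_infsum:
  fixes f :: "'b \<Rightarrow> real"
  assumes nonneg: "\<And>x. x \<in> A \<Longrightarrow> 0 \<le> f x"
    and finite: "(\<Sum>\<^sub>\<infinity>x\<in>A. ennreal (f x)) < \<infinity>"
  shows "ennreal (infsum f A) = (\<Sum>\<^sub>\<infinity>x\<in>A. ennreal (f x))"
proof -
  have finite_sums: "ennreal (sum f F) = (\<Sum>x\<in>F. ennreal (f x))" if "F \<subseteq> A" for F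
    using that nonneg by (intro sum_ennreal[symmetric]) auto
  have "f summable_on A"
  proof (rule nonneg_bdd_above_summable_on[OF nonneg])
    obtain r where r: "(\<Sum>\<^sub>\<infinity>x\<in>A. ennreal (f x)) = ennreal r" "0 \<le> r"
      using finite by (cases "\<Sum>\<^sub>\<infinity>x\<in>A. ennreal (f x)") auto
    have "sum f F \<le> r" if "F \<subseteq> A" "finite F" for F
    proof -
      have "ennreal (sum f F) \<le> (\<Sum>\<^sub>\<infinity>x\<in>A. ennreal (f x))"
        using that ennreal_infsum_mono_set[of F A "\<lambda>x. ennreal (f x)"] by (simp add: finite_sums)
      then show ?thesis using r by (auto simp: ennreal_le_iff2)
    qed
    then show "bdd_above (sum f ` {F. F \<subseteq> A \<and> finite F})" by (intro bdd_aboveI) blast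
  qed
  then have "ennreal (infsum f A) = (SUP F\<in>{F. finite F \<and> F \<subseteq> A}. ennreal (sum f F))"
    by (rule infsum_nonneg_is_SUPREMUM_ennreal) (rule nonneg)
  also have "\<dots> = (SUP F\<in>{F. finite F \<and> F \<subseteq> A}. \<Sum>x\<in>F. ennreal (f x))"
    by (rule SUP_cong) (simp_all add: finite_sums)
  also have "\<dots> = (\<Sum>\<^sub>\<infinity>x\<in>A. ennreal (f x))"
    by (rule nonneg_infsum_complete[symmetric]) simp
  finally show ?thesis .
qed

lemma set_butlast_last: "xs \<noteq> [] \<Longrightarrow> set xs = insert (last xs) (set (butlast xs))"
  by (metis append_butlast_last_id insert_is_Un list.set(2) set_append sup_commute set_empty2)

definition loop_erase_step :: "'a list \<Rightarrow> 'a \<Rightarrow> 'a list" where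
  "loop_erase_step s v = takeWhile (\<lambda>u. u \<noteq> v) s @ [v]"

definition loop_erase :: "'a list \<Rightarrow> 'a list" where
  "loop_erase l = foldl loop_erase_step [] l"

lemma loop_erase_Nil [simp]: "loop_erase [] = []"
  by (simp add: loop_erase_def)

lemma loop_erase_snoc: "loop_erase (l @ [v]) = loop_erase_step (loop_erase l) v"
  by (simp add: loop_erase_def)

lemma loop_erase_ends:
  assumes "l \<noteq> []"
  shows "loop_erase l \<noteq> []" "hd (loop_erase l) = hd l" "last (loop_erase l) = last l"
proof -
  have "loop_erase l \<noteq> [] \<and> hd (loop_erase l) = hd l \<and> last (loop_erase l) = last l"
    using assms
  proof (induction l rule: rev_induct)
    case (snoc v l)
    show ?case
    proof (cases "l = []")
      case True
      then show ?thesis by (simp add: loop_erase_def loop_erase_step_def)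
    next
      case False
      then obtain s where "loop_erase l = hd l # s"
        using snoc.IH by (cases "loop_erase l") auto
      then show ?thesis using False by (simp add: loop_erase_snoc loop_erase_step_def)
    qed
  qed simp
  then show "loop_erase l \<noteq> []" "hd (loop_erase l) = hd l" "last (loop_erase l) = last l"
    by auto
qed

lemma distinct_loop_erase: "distinct (loop_erase l)"
proof (induction l rule: rev_induct)
  case (snoc v l)
  then have "distinct (takeWhile (\<lambda>u. u \<noteq> v) (loop_erase l))"
    by (metis distinct_append takeWhile_dropWhile_id)
  then show ?case by (auto simp: loop_erase_snoc loop_erase_step_def dest: set_takeWhileD)
qed simp

lemma set_loop_erase: "set (loop_erase l) \<subseteq> set l"
  by (induction l rule: rev_induct)
    (auto simp: loop_erase_snoc loop_erase_step_def dest: set_takeWhileD)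

lemma loop_erase_closed: "l \<noteq> [] \<Longrightarrow> hd l = last l \<Longrightarrow> loop_erase l = [hd l]"
  using loop_erase_ends[of l] distinct_loop_erase[of l]
  by (cases "loop_erase l" rule: rev_cases) (auto simp: hd_append split: if_splits dest: hd_in_set)

lemma foldl_loop_erase_step_Cons:
  "u \<notin> set l \<Longrightarrow> foldl loop_erase_step (u # s) l = u # foldl loop_erase_step s l"
  by (induction l arbitrary: s) (auto simp: loop_erase_step_def)

lemma loop_erase_loop_append:
  assumes "l \<noteq> []" "hd l = v" "last l = v" "v \<notin> set b"
  shows "loop_erase (l @ b) = v # loop_erase b"
  using assms loop_erase_closed[of l] foldl_loop_erase_step_Cons[of v b "[]"]
  by (simp add: loop_erase_def)

lemma distinct_last_notin_butlast: "distinct xs \<Longrightarrow> xs \<noteq> [] \<Longrightarrow> last xs \<notin> set (butlast xs)"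
  by (induction xs) (auto dest: in_set_butlastD)

lemma append_eq_append_last_occurrence:
  assumes "xs @ ys = xs' @ ys'" "xs \<noteq> []" "xs' \<noteq> []" "last xs = v" "last xs' = v"
    and "v \<notin> set ys" "v \<notin> set ys'"
  shows "xs = xs'"
proof -
  obtain us where "xs = xs' @ us \<and> us @ ys = ys' \<or> xs @ us = xs' \<and> ys = us @ ys'"
    using assms(1) by (auto simp: append_eq_append_conv2)
  then show ?thesis
    using assms(2-) by (metis Un_iff append.right_neutral last_appendR last_in_set set_append)
qed

lemma append_eq_append_first_occurrence:
  assumes "xs @ ys = xs' @ ys'" "xs \<noteq> []" "xs' \<noteq> []" "last xs = v" "last xs' = v"
    and "v \<notin> set (butlast xs)" "v \<notin> set (butlast xs')"
  shows "xs = xs'"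
proof -
  obtain us where "xs = xs' @ us \<and> us @ ys = ys' \<or> xs @ us = xs' \<and> ys = us @ ys'"
    using assms(1) by (auto simp: append_eq_append_conv2)
  then show ?thesis
    using assms(2-) by (metis Un_iff append.right_neutral butlast_append last_in_set set_append)
qed

lemma bij_betw_restrict:
  assumes "bij_betw h A B" "\<And>x. x \<in> A \<Longrightarrow> R (h x) \<longleftrightarrow> S x"
  shows "bij_betw h {x \<in> A. S x} {y \<in> B. R y}"
  using assms by (auto simp: bij_betw_def inj_on_def image_iff)

lemma graph_path_Cons_Cons:
  "graph_path c (x # y # r) \<longleftrightarrow> adj c x y \<and> graph_path c (y # r)"
  by (auto simp: graph_path_def nth_Cons less_Suc_eq_0_disj split: nat.splits)

locale weighted_walk =
  fixes V :: "'a set" and c :: "'a \<Rightarrow> 'a \<Rightarrow> real"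
  assumes weighted_graph: "weighted_graph V c"
begin

abbreviation P :: "'a \<Rightarrow> 'a \<Rightarrow> real" where
  "P \<equiv> trans_prob V c"

definition walk_weight :: "'a list \<Rightarrow> ennreal" where
  "walk_weight l = ennreal (traj_prob V c l)"

lemma finite_V: "finite V"
  using weighted_graph by (simp add: weighted_graph_def)

lemma conductance_nonneg: "0 \<le> c a b"
  using weighted_graph by (simp add: weighted_graph_def)

lemma conductance_in_V: "c a b \<noteq> 0 \<Longrightarrow> a \<in> V \<and> b \<in> V"
  using weighted_graph unfolding weighted_graph_def by blast

lemma trans_prob_nonneg: "0 \<le> P a b"
  by (simp add: trans_prob_def stat_def conductance_nonneg sum_nonneg)

lemma trans_prob_nonzero: "P a b \<noteq> 0 \<Longrightarrow> a \<in> V \<and> b \<in> V \<and> adj c a b"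
  using conductance_in_V[of a b] conductance_nonneg[of a b]
  by (auto simp: trans_prob_def adj_def)

lemma sum_trans_prob_le_1:
  assumes "finite B"
  shows "(\<Sum>b\<in>B. P a b) \<le> 1"
proof -
  have "(\<Sum>b\<in>B. c a b) = (\<Sum>b\<in>B \<inter> V. c a b)"
    using assms conductance_in_V by (intro sum.mono_neutral_right) auto
  also have "\<dots> \<le> stat V c a"
    unfolding stat_def by (rule sum_mono2) (auto simp: finite_V conductance_nonneg)
  moreover have "0 \<le> stat V c a"
    by (simp add: stat_def sum_nonneg conductance_nonneg)
  ultimately show ?thesis
    by (cases "stat V c a = 0") (simp_all add: trans_prob_def sum_divide_distrib[symmetric])
qed

lemma sum_trans_prob: "0 < stat V c a \<Longrightarrow> (\<Sum>b\<in>V. P a b) = 1"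
  by (simp add: trans_prob_def sum_divide_distrib[symmetric] stat_def)

lemma traj_prob_Cons_Cons [simp]: "traj_prob V c (a # b # l) = P a b * traj_prob V c (b # l)"
  unfolding traj_prob_def by (simp only: length_Cons diff_Suc_1 prod.lessThan_Suc_shift) simp

lemma traj_prob_nonneg: "0 \<le> traj_prob V c l"
  unfolding traj_prob_def by (rule prod_nonneg) (simp add: trans_prob_nonneg)

lemma walk_weight_singleton [simp]: "walk_weight [a] = 1"
  by (simp add: walk_weight_def traj_prob_def)

lemma walk_weight_Cons: "l \<noteq> [] \<Longrightarrow> walk_weight (a # l) = ennreal (P a (hd l)) * walk_weight l"
  by (cases l) (auto simp: walk_weight_def ennreal_mult trans_prob_nonneg traj_prob_nonneg)

lemma walk_weight_append:
  "l1 \<noteq> [] \<Longrightarrow> l2 \<noteq> [] \<Longrightarrow>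
   walk_weight (l1 @ l2) = walk_weight l1 * ennreal (P (last l1) (hd l2)) * walk_weight l2"
proof (induction l1 rule: list_nonempty_induct)
  case (cons a l1)
  then show ?case by (simp add: walk_weight_Cons mult.assoc)
qed (simp add: walk_weight_Cons)

lemma walk_weight_join:
  assumes "l1 \<noteq> []" "l2 \<noteq> []" "last l1 = hd l2"
  shows "walk_weight (l1 @ tl l2) = walk_weight l1 * walk_weight l2"
proof (cases "tl l2")
  case Nil
  then show ?thesis using assms by (cases l2) auto
next
  case (Cons b r)
  then have "l2 = hd l2 # b # r" using assms(2) by (metis list.collapse)
  then have "walk_weight l2 = ennreal (P (hd l2) b) * walk_weight (b # r)"
    by (metis walk_weight_Cons list.distinct(1) list.sel(1))
  then show ?thesis
    using assms Cons walk_weight_append[of l1 "b # r"] by (simp add: mult.assoc)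
qed

lemma graph_path_if_walk_weight:
  assumes "walk_weight l \<noteq> 0" "l \<noteq> []"
  shows "graph_path c l"
proof -
  have "traj_prob V c l \<noteq> 0" using assms(1) by (metis ennreal_0 walk_weight_def)
  then have "P (l ! i) (l ! Suc i) \<noteq> 0" if "Suc i < length l" for i
    using that by (auto simp: traj_prob_def prod_zero_iff)
  then show ?thesis using assms(2) trans_prob_nonzero by (auto simp: graph_path_def)
qed

lemma walk_weight_eq_0_if_outside:
  assumes "i < length l - 1" "l ! i \<notin> V"
  shows "walk_weight l = 0"
proof -
  have "P (l ! i) (l ! Suc i) = 0" using trans_prob_nonzero assms(2) by blast
  then have "traj_prob V c l = 0"
    unfolding traj_prob_def using assms(1) by (auto simp: prod_zero_iff)
  then show ?thesis by (simp add: walk_weight_def)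
qed

lemma sum_walk_weight_first_step:
  assumes "finite F" "\<And>l. l \<in> F \<Longrightarrow> l = a # tl l \<and> tl l \<noteq> []"
  shows "sum walk_weight F =
    (\<Sum>b\<in>(\<lambda>l. hd (tl l)) ` F. ennreal (P a b) * sum walk_weight (tl ` {l \<in> F. hd (tl l) = b}))"
proof -
  have "sum walk_weight F = (\<Sum>b\<in>(\<lambda>l. hd (tl l)) ` F. sum walk_weight {l \<in> F. hd (tl l) = b})"
    by (rule sum.group[symmetric]) (use assms(1) in auto)
  also have "\<dots> = (\<Sum>b\<in>(\<lambda>l. hd (tl l)) ` F. ennreal (P a b) * sum walk_weight (tl ` {l \<in> F. hd (tl l) = b}))"
  proof (rule sum.cong[OF refl])
    fix b
    have "inj_on tl {l \<in> F. hd (tl l) = b}"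
      by (rule inj_onI) (metis (no_types, lifting) assms(2) mem_Collect_eq)
    moreover have "walk_weight l = ennreal (P a b) * walk_weight (tl l)" if "l \<in> F" "hd (tl l) = b" for l
      using that assms(2) walk_weight_Cons[of "tl l" a] by metis
    ultimately show "sum walk_weight {l \<in> F. hd (tl l) = b} =
        ennreal (P a b) * sum walk_weight (tl ` {l \<in> F. hd (tl l) = b})"
      by (simp add: sum.reindex sum_distrib_left)
  qed
  finally show ?thesis .
qed

text \<open>Prefix-free families of walks describe disjoint events for the random walk.\<close>

lemma sum_walk_weight_prefix_free:
  assumes "finite F" "\<And>l. l \<in> F \<Longrightarrow> l \<noteq> [] \<and> hd l = a \<and> length l \<le> n"
    and "\<And>l l'. l \<in> F \<Longrightarrow> l' \<in> F \<Longrightarrow> prefix l l' \<Longrightarrow> l = l'"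
  shows "sum walk_weight F \<le> 1"
  using assms
proof (induction n arbitrary: a F)
  case 0
  then show ?case by (cases "F = {}") auto
next
  case (Suc n)
  show ?case
  proof (cases "[a] \<in> F")
    case True
    have "prefix [a] l" if "l \<in> F" for l
      using Suc.prems(2)[OF that] by (cases l) auto
    then have "F = {[a]}" using True Suc.prems(3) by blast
    then show ?thesis by simp
  next
    case False
    have F_Cons: "l = a # tl l \<and> tl l \<noteq> []" if "l \<in> F" for l
      using Suc.prems(2)[OF that] False that by (cases l) auto
    define F' where "F' b = tl ` {l \<in> F. hd (tl l) = b}" for b
    have tails_le_1: "sum walk_weight (F' b) \<le> 1" for b
    proof (rule Suc.IH)
      show "finite (F' b)" using Suc.prems(1) by (simp add: F'_def)
      show "l \<noteq> [] \<and> hd l = b \<and> length l \<le> n" if "l \<in> F' b" for l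
        using that Suc.prems(2) F_Cons by (force simp: F'_def)
      show "l = l'" if l: "l \<in> F' b" "l' \<in> F' b" "prefix l l'" for l l'
      proof -
        obtain l1 l2 where "l1 \<in> F" "l2 \<in> F" "l = tl l1" "l' = tl l2"
          using l(1,2) by (auto simp: F'_def)
        moreover have "prefix l1 l2"
          using l(3) F_Cons calculation by (metis Cons_prefix_Cons)
        ultimately show ?thesis using Suc.prems(3) by blast
      qed
    qed
    have "sum walk_weight F = (\<Sum>b\<in>(\<lambda>l. hd (tl l)) ` F. ennreal (P a b) * sum walk_weight (F' b))"
      unfolding F'_def using Suc.prems(1) F_Cons by (rule sum_walk_weight_first_step)
    also have "\<dots> \<le> (\<Sum>b\<in>(\<lambda>l. hd (tl l)) ` F. ennreal (P a b))"
      using tails_le_1 by (intro sum_mono) (auto intro: mult_left_le)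
    also have "\<dots> = ennreal (\<Sum>b\<in>(\<lambda>l. hd (tl l)) ` F. P a b)"
      by (rule sum_ennreal) (simp add: trans_prob_nonneg)
    also have "\<dots> \<le> 1"
      using sum_trans_prob_le_1 Suc.prems(1) by simp
    finally show ?thesis .
  qed
qed

lemma infsum_walk_weight_prefix_free:
  assumes "\<And>l. l \<in> L \<Longrightarrow> l \<noteq> [] \<and> hd l = a"
    and "\<And>l l'. l \<in> L \<Longrightarrow> l' \<in> L \<Longrightarrow> prefix l l' \<Longrightarrow> l = l'"
  shows "infsum walk_weight L \<le> 1"
proof -
  have "sum walk_weight F \<le> 1" if F: "finite F" "F \<subseteq> L" for F
  proof (rule sum_walk_weight_prefix_free[of F a "Max (length ` F)"])
    show "l \<noteq> [] \<and> hd l = a \<and> length l \<le> Max (length ` F)" if "l \<in> F" for l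
      using that F assms(1) by (auto simp: Max_ge)
    show "l = l'" if "l \<in> F" "l' \<in> F" "prefix l l'" for l l'
      using that F assms(2) by blast
  qed (use F in simp)
  then show ?thesis
    using nonneg_infsum_complete[where f=walk_weight and A=L] by (auto intro!: SUP_least)
qed

definition stopped_walks :: "'a set \<Rightarrow> 'a set \<Rightarrow> 'a \<Rightarrow> 'a list set" where
  "stopped_walks E T a = {l. l \<noteq> [] \<and> hd l = a \<and> last l \<in> T \<and> set (butlast l) \<subseteq> E}"

definition exit_prob :: "'a set \<Rightarrow> 'a set \<Rightarrow> 'a \<Rightarrow> ennreal" where
  "exit_prob E T a = infsum walk_weight (stopped_walks E T a)"

lemma exit_prob_le_1:
  assumes "E \<inter> T = {}"
  shows "exit_prob E T a \<le> 1"
  unfolding exit_prob_def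
proof (rule infsum_walk_weight_prefix_free)
  show "l \<noteq> [] \<and> hd l = a" if "l \<in> stopped_walks E T a" for l
    using that by (simp add: stopped_walks_def)
  show "l = l'" if l: "l \<in> stopped_walks E T a" "l' \<in> stopped_walks E T a" "prefix l l'" for l l'
  proof -
    obtain r where r: "l' = l @ r" using l(3) by (auto simp: prefix_def)
    have "last l \<notin> set (butlast l')"
      using l(1,2) assms by (auto simp: stopped_walks_def)
    then show ?thesis
      using r l(1) by (cases r) (auto simp: stopped_walks_def butlast_append)
  qed
qed

lemma stopped_walks_start_in_target:
  "E \<inter> T = {} \<Longrightarrow> t \<in> T \<Longrightarrow> stopped_walks E T t = {[t]}"
  by (auto simp: stopped_walks_def neq_Nil_conv)

lemma stopped_walks_Cons:
  assumes "a \<in> E" "a \<notin> T"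
  shows "stopped_walks E T a = (\<lambda>(b, \<beta>). a # \<beta>) ` Sigma UNIV (stopped_walks E T)"
proof
  show "stopped_walks E T a \<subseteq> (\<lambda>(b, \<beta>). a # \<beta>) ` Sigma UNIV (stopped_walks E T)"
  proof
    fix l assume l: "l \<in> stopped_walks E T a"
    then obtain \<beta> where "l = a # \<beta>" "\<beta> \<noteq> []"
      using assms(2) by (cases l; cases "tl l") (auto simp: stopped_walks_def)
    moreover have "\<beta> \<in> stopped_walks E T (hd \<beta>)"
      using l calculation by (auto simp: stopped_walks_def)
    ultimately show "l \<in> (\<lambda>(b, \<beta>). a # \<beta>) ` Sigma UNIV (stopped_walks E T)" by force
  qed
  show "(\<lambda>(b, \<beta>). a # \<beta>) ` Sigma UNIV (stopped_walks E T) \<subseteq> stopped_walks E T a"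
    using assms(1) by (auto simp: stopped_walks_def)
qed

lemma exit_prob_first_step:
  assumes "E \<inter> T = {}" "a \<in> E"
  shows "exit_prob E T a = (\<Sum>b\<in>V. ennreal (P a b) * exit_prob E T b)"
proof -
  have inj: "inj_on (\<lambda>(b, \<beta>). a # \<beta>) (Sigma UNIV (stopped_walks E T))"
    by (rule inj_onI) (auto simp: stopped_walks_def)
  have "a \<notin> T" using assms by blast
  then have "exit_prob E T a = (\<Sum>\<^sub>\<infinity>(b, \<beta>)\<in>Sigma UNIV (stopped_walks E T). walk_weight (a # \<beta>))"
    unfolding exit_prob_def stopped_walks_Cons[OF assms(2) \<open>a \<notin> T\<close>]
    by (subst infsum_reindex[OF inj]) (simp add: o_def case_prod_unfold)
  also have "\<dots> = (\<Sum>\<^sub>\<infinity>(b, \<beta>)\<in>Sigma UNIV (stopped_walks E T). ennreal (P a b) * walk_weight \<beta>)"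
    by (rule infsum_cong) (auto simp: stopped_walks_def walk_weight_Cons)
  also have "\<dots> = (\<Sum>\<^sub>\<infinity>b\<in>UNIV. ennreal (P a b) * exit_prob E T b)"
    by (simp add: ennreal_infsum_Sigma ennreal_infsum_cmult_right exit_prob_def)
  also have "\<dots> = (\<Sum>b\<in>V. ennreal (P a b) * exit_prob E T b)"
    using trans_prob_nonzero[of a] finite_V
    by (subst infsum_cong_neutral[where T=V and g="\<lambda>b. ennreal (P a b) * exit_prob E T b"])
      (auto, metis ennreal_0)
  finally show ?thesis .
qed

end

locale absorbed_walk = weighted_walk +
  fixes W :: "'a set"
  assumes connected: "connected_graph V c" and W_subset: "W \<subseteq> V" and W_nonempty: "W \<noteq> {}"
begin

lemma stat_pos:
  assumes "a \<in> V - W"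
  shows "0 < stat V c a"
proof -
  obtain w where w: "w \<in> W" using W_nonempty by auto
  then obtain q where q: "graph_path c q" "hd q = a" "last q = w"
    using connected assms W_subset unfolding connected_graph_def by blast
  then obtain b r where "q = a # b # r"
    using assms w by (cases q; cases "tl q") (auto simp: graph_path_def)
  then have ab: "0 < c a b" using q(1) by (simp add: graph_path_Cons_Cons adj_def)
  then have "c a b \<le> stat V c a"
    unfolding stat_def using conductance_in_V[of a b]
    by (intro member_le_sum) (auto simp: finite_V conductance_nonneg)
  then show ?thesis using ab by simp
qed

text \<open>Maximum principle: the transition probabilities from b sum to 1 and are positive exactly
  on the neighbours of b.\<close>

lemma harmonic_neighbour_eq_max:
  assumes "b \<in> V - W" "f b = (\<Sum>x\<in>V. P b x * f x)" "\<And>x. x \<in> V \<Longrightarrow> f x \<le> f b"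
    and "adj c b b'"
  shows "f b' = f b"
proof -
  have "(\<Sum>x\<in>V. P b x * (f b - f x)) = f b * (\<Sum>x\<in>V. P b x) - (\<Sum>x\<in>V. P b x * f x)"
    by (simp add: algebra_simps sum_subtractf sum_distrib_left)
  also have "\<dots> = 0" using assms(1,2) stat_pos sum_trans_prob by simp
  finally have "\<forall>x\<in>V. P b x * (f b - f x) = 0"
    using assms(3) trans_prob_nonneg finite_V by (subst sum_nonneg_eq_0_iff[symmetric]) auto
  moreover have "b' \<in> V" "0 < P b b'"
    using assms(1,4) conductance_in_V[of b b'] stat_pos[of b] by (auto simp: adj_def trans_prob_def)
  ultimately have "P b b' * (f b - f b') = 0" and "P b b' \<noteq> 0" by auto
  then show ?thesis by simp
qed

lemma harmonic_max_reaches_target: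
  assumes "E \<inter> T = {}" "E \<union> T = V" "W \<subseteq> T"
    and harmonic: "\<And>b. b \<in> E \<Longrightarrow> f b = (\<Sum>x\<in>V. P b x * f x)"
    and max: "\<And>x. x \<in> V \<Longrightarrow> f x \<le> f a" and "a \<in> V"
  shows "\<exists>t\<in>T. f t = f a"
proof -
  have "\<exists>t\<in>T. f t = f a" if "graph_path c q" "hd q \<in> V" "f (hd q) = f a" "last q \<in> T" for q
    using that
  proof (induction q)
    case (Cons x r)
    show ?case
    proof (cases "x \<in> T")
      case False
      then obtain y r' where r: "r = y # r'" using Cons.prems(4) by (cases r) auto
      then have xy: "adj c x y" and "graph_path c r" using Cons.prems(1) by (auto simp: graph_path_Cons_Cons)
      moreover have "x \<in> V - W" using False Cons.prems(2) assms(3) by auto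
      moreover have "x \<in> E" using False Cons.prems(2) assms(2) by auto
      ultimately have "f y = f a"
        using harmonic_neighbour_eq_max[of x f y] harmonic max Cons.prems(2,3) by auto
      moreover have "y \<in> V" using xy conductance_in_V[of x y] by (simp add: adj_def)
      ultimately show ?thesis using Cons.IH \<open>graph_path c r\<close> Cons.prems(4) r by simp
    qed (use Cons.prems in auto)
  qed (simp add: graph_path_def)
  moreover obtain w where "w \<in> W" using W_nonempty by auto
  then obtain q where "graph_path c q" "hd q = a" "last q = w"
    using connected \<open>a \<in> V\<close> W_subset unfolding connected_graph_def by blast
  ultimately show ?thesis using \<open>a \<in> V\<close> \<open>w \<in> W\<close> assms(3) by blast
qed

lemma exit_prob_eq_1:
  assumes ET: "E \<inter> T = {}" "E \<union> T = V" "W \<subseteq> T" and "a \<in> V"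
  shows "exit_prob E T a = 1"
proof -
  define d where "d b = 1 - enn2real (exit_prob E T b)" for b
  have finite: "exit_prob E T b = ennreal (enn2real (exit_prob E T b))" for b
    using exit_prob_le_1[OF ET(1), of b]
    by (metis ennreal_enn2real ennreal_one_less_top le_less_trans less_imp_neq)
  have d_nonneg: "0 \<le> d b" for b
    using enn2real_mono[OF exit_prob_le_1[OF ET(1), of b]] by (simp add: d_def)
  have d_target: "d t = 0" if "t \<in> T" for t
    using stopped_walks_start_in_target[OF ET(1) that] by (simp add: d_def exit_prob_def)
  have d_harmonic: "d b = (\<Sum>x\<in>V. P b x * d x)" if "b \<in> E" for b
  proof -
    have "exit_prob E T b = (\<Sum>x\<in>V. ennreal (P b x) * exit_prob E T x)"
      by (rule exit_prob_first_step[OF ET(1) that])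
    also have "\<dots> = (\<Sum>x\<in>V. ennreal (P b x * enn2real (exit_prob E T x)))"
      by (rule sum.cong[OF refl]) (metis finite ennreal_mult trans_prob_nonneg enn2real_nonneg)
    also have "\<dots> = ennreal (\<Sum>x\<in>V. P b x * enn2real (exit_prob E T x))"
      by (rule sum_ennreal) (simp add: trans_prob_nonneg)
    finally have "enn2real (exit_prob E T b) = (\<Sum>x\<in>V. P b x * enn2real (exit_prob E T x))"
      by (simp add: sum_nonneg trans_prob_nonneg)
    moreover have "(\<Sum>x\<in>V. P b x) = 1"
      using that ET stat_pos[of b] by (intro sum_trans_prob) auto
    ultimately show ?thesis
      by (simp add: d_def algebra_simps sum_subtractf sum_distrib_left)
  qed
  have "Max (d ` V) \<in> d ` V" using finite_V \<open>a \<in> V\<close> by (intro Max_in) auto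
  then obtain a0 where a0: "a0 \<in> V" "d a0 = Max (d ` V)" by auto
  have max: "d x \<le> d a0" if "x \<in> V" for x using that a0(2) finite_V by simp
  then have "d a0 = 0"
    using harmonic_max_reaches_target[OF ET d_harmonic _ a0(1)] d_target by fastforce
  then have "d a = 0" using max[OF \<open>a \<in> V\<close>] d_nonneg[of a] by simp
  then show ?thesis using finite[of a] by (simp add: d_def)
qed

end

context weighted_walk
begin

definition walks_in :: "'a set \<Rightarrow> 'a \<Rightarrow> 'a \<Rightarrow> 'a list set" where
  "walks_in E a b = {l. l \<noteq> [] \<and> hd l = a \<and> last l = b \<and> set l \<subseteq> E}"

definition green :: "'a set \<Rightarrow> 'a \<Rightarrow> 'a \<Rightarrow> ennreal" where
  "green E a b = infsum walk_weight (walks_in E a b)"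

definition hit_walks :: "'a set \<Rightarrow> 'a \<Rightarrow> 'a \<Rightarrow> 'a list set" where
  "hit_walks E b a = {l \<in> walks_in E b a. a \<notin> set (butlast l)}"

definition hit_prob :: "'a set \<Rightarrow> 'a \<Rightarrow> 'a \<Rightarrow> ennreal" where
  "hit_prob E b a = infsum walk_weight (hit_walks E b a)"

lemma green_eq_0_if_notin:
  assumes "a \<notin> E"
  shows "green E a b = 0"
proof -
  have "walks_in E a b = {}" using assms hd_in_set by (fastforce simp: walks_in_def)
  then show ?thesis by (simp add: green_def)
qed

lemma hit_prob_le_1: "hit_prob E b a \<le> 1"
  unfolding hit_prob_def
proof (rule infsum_walk_weight_prefix_free)
  show "l \<noteq> [] \<and> hd l = b" if "l \<in> hit_walks E b a" for l
    using that by (simp add: hit_walks_def walks_in_def)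
  show "l = l'" if l: "l \<in> hit_walks E b a" "l' \<in> hit_walks E b a" "prefix l l'" for l l'
  proof -
    obtain r where "l' = l @ r" using l(3) by (auto simp: prefix_def)
    then show ?thesis
      using l(1,2) append_eq_append_first_occurrence[of l r l' "[]" a]
      by (simp add: hit_walks_def walks_in_def)
  qed
qed

lemma walks_through_bij:
  "bij_betw (\<lambda>(l1, l2). l1 @ tl l2) (hit_walks E b a \<times> walks_in E a z) {l \<in> walks_in E b z. a \<in> set l}"
proof (rule bij_betw_imageI)
  show "inj_on (\<lambda>(l1, l2). l1 @ tl l2) (hit_walks E b a \<times> walks_in E a z)"
  proof (rule inj_onI, clarsimp)
    fix l1 l2 l1' l2'
    assume l: "l1 \<in> hit_walks E b a" "l2 \<in> walks_in E a z" "l1' \<in> hit_walks E b a" "l2' \<in> walks_in E a z"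
      and eq: "l1 @ tl l2 = l1' @ tl l2'"
    then have "l1 = l1'"
      by (intro append_eq_append_first_occurrence[OF eq, of a]) (auto simp: hit_walks_def walks_in_def)
    moreover have "l2 \<noteq> []" "l2' \<noteq> []" "hd l2 = hd l2'"
      using l(2,4) by (auto simp: walks_in_def)
    ultimately show "l1 = l1' \<and> l2 = l2'" using eq by (metis list.collapse same_append_eq)
  qed
  show "(\<lambda>(l1, l2). l1 @ tl l2) ` (hit_walks E b a \<times> walks_in E a z) = {l \<in> walks_in E b z. a \<in> set l}"
  proof (intro equalityI subsetI)
    fix l assume "l \<in> (\<lambda>(l1, l2). l1 @ tl l2) ` (hit_walks E b a \<times> walks_in E a z)"
    then obtain l1 l2 where "l = l1 @ tl l2" "l1 \<in> hit_walks E b a" "l2 \<in> walks_in E a z" by auto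
    then show "l \<in> {l \<in> walks_in E b z. a \<in> set l}"
      by (cases l2; cases "tl l2")
        (auto simp: hit_walks_def walks_in_def dest: list.set_sel(2))
  next
    fix l assume "l \<in> {l \<in> walks_in E b z. a \<in> set l}"
    then have l: "l \<noteq> []" "hd l = b" "last l = z" "set l \<subseteq> E" "a \<in> set l"
      by (auto simp: walks_in_def)
    obtain ys zs where yz: "l = ys @ a # zs" "a \<notin> set ys" using split_list_first[OF l(5)] by blast
    have "ys @ [a] \<in> hit_walks E b a" "a # zs \<in> walks_in E a z"
      using l yz by (cases ys; cases zs; auto simp: hit_walks_def walks_in_def)+
    then show "l \<in> (\<lambda>(l1, l2). l1 @ tl l2) ` (hit_walks E b a \<times> walks_in E a z)"
      using yz by (intro image_eqI[where x="(ys @ [a], a # zs)"]) auto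
  qed
qed

lemma infsum_walks_through:
  "infsum walk_weight {l \<in> walks_in E b z. a \<in> set l} = hit_prob E b a * green E a z"
proof -
  have "infsum walk_weight {l \<in> walks_in E b z. a \<in> set l} =
        (\<Sum>\<^sub>\<infinity>(l1, l2)\<in>hit_walks E b a \<times> walks_in E a z. walk_weight (l1 @ tl l2))"
    using infsum_reindex_bij_betw[OF walks_through_bij, of walk_weight]
    by (simp add: case_prod_unfold)
  also have "\<dots> = (\<Sum>\<^sub>\<infinity>(l1, l2)\<in>hit_walks E b a \<times> walks_in E a z. walk_weight l1 * walk_weight l2)"
    by (rule infsum_cong) (auto simp: hit_walks_def walks_in_def walk_weight_join)
  finally show ?thesis
    by (simp add: ennreal_infsum_product hit_prob_def green_def)
qed

lemma green_eq_hit_prob_mult: "green E b a = hit_prob E b a * green E a a"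
proof -
  have "{l \<in> walks_in E b a. a \<in> set l} = walks_in E b a"
    by (auto simp: walks_in_def)
  then show ?thesis using infsum_walks_through[of E b a a] by (simp add: green_def)
qed

lemma green_diag_remove: "green E b b = green (E - {a}) b b + hit_prob E b a * green E a b"
proof -
  have "walks_in E b b = walks_in (E - {a}) b b \<union> {l \<in> walks_in E b b. a \<in> set l}"
    and "walks_in (E - {a}) b b \<inter> {l \<in> walks_in E b b. a \<in> set l} = {}"
    by (auto simp: walks_in_def)
  then have "green E b b = green (E - {a}) b b + infsum walk_weight {l \<in> walks_in E b b. a \<in> set l}"
    unfolding green_def by (metis infsum_Un_disjoint ennreal_summable_on)
  then show ?thesis by (simp add: infsum_walks_through)
qed

lemma last_visit_bij:
  assumes "E \<inter> T = {}" "v \<in> E"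
  shows "bij_betw (\<lambda>(l0, b). l0 @ b)
    (walks_in E v v \<times> {b. b \<noteq> [] \<and> last b \<in> T \<and> set (butlast b) \<subseteq> E - {v}}) (stopped_walks E T v)"
proof (rule bij_betw_imageI)
  let ?app = "\<lambda>(l0, b). l0 @ b"
  let ?B = "{b. b \<noteq> [] \<and> last b \<in> T \<and> set (butlast b) \<subseteq> E - {v}}"
  have v_notin: "v \<notin> set b" if "b \<in> ?B" for b
    using that assms set_butlast_last[of b] by auto
  show "inj_on ?app (walks_in E v v \<times> ?B)"
  proof (rule inj_onI)
    fix x y assume xy: "x \<in> walks_in E v v \<times> ?B" "y \<in> walks_in E v v \<times> ?B" "?app x = ?app y"
    obtain l0 b l0' b' where "x = (l0, b)" "y = (l0', b')" by fastforce
    with xy show "x = y"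
      using append_eq_append_last_occurrence[of l0 b l0' b' v] v_notin by (auto simp: walks_in_def)
  qed
  show "?app ` (walks_in E v v \<times> ?B) = stopped_walks E T v"
  proof (intro equalityI subsetI)
    fix l assume "l \<in> ?app ` (walks_in E v v \<times> ?B)"
    then show "l \<in> stopped_walks E T v"
      by (auto simp: walks_in_def stopped_walks_def butlast_append)
  next
    fix l assume l: "l \<in> stopped_walks E T v"
    then have "v \<in> set l" by (auto simp: stopped_walks_def)
    then obtain ys zs where yz: "l = ys @ v # zs" "v \<notin> set zs" using split_list_last by metis
    have "zs \<noteq> []" using yz l assms by (auto simp: stopped_walks_def)
    then have "ys @ [v] \<in> walks_in E v v" "zs \<in> ?B"
      using l yz
      by (auto simp: walks_in_def stopped_walks_def butlast_append hd_append split: if_splits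
          dest: in_set_butlastD)
    then show "l \<in> ?app ` (walks_in E v v \<times> ?B)"
      using yz by (intro image_eqI[where x="(ys @ [v], zs)"]) auto
  qed
qed

lemma infsum_walks_in_append:
  assumes "\<And>b. b \<in> C \<Longrightarrow> b \<noteq> []"
  shows "(\<Sum>\<^sub>\<infinity>(l0, b)\<in>walks_in E v v \<times> C. walk_weight (l0 @ b)) =
    green E v v * (\<Sum>\<^sub>\<infinity>b\<in>C. ennreal (P v (hd b)) * walk_weight b)"
proof -
  have "(\<Sum>\<^sub>\<infinity>(l0, b)\<in>walks_in E v v \<times> C. walk_weight (l0 @ b)) =
      (\<Sum>\<^sub>\<infinity>(l0, b)\<in>walks_in E v v \<times> C. walk_weight l0 * (ennreal (P v (hd b)) * walk_weight b))"
    using assms by (intro infsum_cong) (auto simp: walks_in_def walk_weight_append mult.assoc)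
  then show ?thesis by (simp add: green_def ennreal_infsum_product)
qed

definition lerw_weight :: "'a set \<Rightarrow> 'a set \<Rightarrow> 'a list \<Rightarrow> ennreal" where
  "lerw_weight E T \<gamma> = infsum walk_weight {\<alpha> \<in> stopped_walks E T (hd \<gamma>). loop_erase \<alpha> = \<gamma>}"

fun green_prod :: "'a set \<Rightarrow> 'a list \<Rightarrow> ennreal" where
  "green_prod E [] = 1"
| "green_prod E (v # s) = green E v v * green_prod (E - {v}) s"

lemma green_prod_append: "green_prod E (s @ t) = green_prod E s * green_prod (E - set s) t"
proof (induction s arbitrary: E)
  case (Cons v s)
  have "E - {v} - set s = E - set (v # s)" by auto
  then show ?case using Cons.IH[of "E - {v}"] by (simp add: mult.assoc)
qed simp

text \<open>Erasing the first loop, i.e.\ the part of the walk up to its last visit to the starting point.\<close>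

lemma lerw_weight_Cons:
  assumes "E \<inter> T = {}" "\<gamma> \<noteq> []"
  shows "lerw_weight E T (v # \<gamma>) = green E v v * ennreal (P v (hd \<gamma>)) * lerw_weight (E - {v}) T \<gamma>"
proof (cases "v \<in> E")
  case False
  have no_walks: "{\<alpha> \<in> stopped_walks E T v. loop_erase \<alpha> = v # \<gamma>} = {}"
  proof (intro equals0I, clarify)
    fix \<alpha> assume "\<alpha> \<in> stopped_walks E T v" "loop_erase \<alpha> = v # \<gamma>"
    with False assms(2) show False
      by (cases \<alpha>; cases "tl \<alpha>") (auto simp: stopped_walks_def loop_erase_def loop_erase_step_def)
  qed
  then show ?thesis
    unfolding lerw_weight_def list.sel(1) no_walks using False by (simp add: green_eq_0_if_notin)
next
  case True
  let ?B = "{b. b \<noteq> [] \<and> last b \<in> T \<and> set (butlast b) \<subseteq> E - {v}}"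
  let ?C = "{b \<in> stopped_walks (E - {v}) T (hd \<gamma>). loop_erase b = \<gamma>}"
  have "loop_erase (l0 @ b) = v # \<gamma> \<longleftrightarrow> b \<in> ?C" if "l0 \<in> walks_in E v v" "b \<in> ?B" for l0 b
  proof -
    have "v \<notin> set b" using that assms True set_butlast_last[of b] by auto
    then have "loop_erase (l0 @ b) = v # loop_erase b"
      using that by (intro loop_erase_loop_append) (auto simp: walks_in_def)
    then show ?thesis using that loop_erase_ends[of b] by (auto simp: stopped_walks_def)
  qed
  then have "bij_betw (\<lambda>(l0, b). l0 @ b) {x \<in> walks_in E v v \<times> ?B. snd x \<in> ?C}
      {\<alpha> \<in> stopped_walks E T v. loop_erase \<alpha> = v # \<gamma>}"
    by (intro bij_betw_restrict[OF last_visit_bij[OF assms(1) True]]) auto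
  moreover have "{x \<in> walks_in E v v \<times> ?B. snd x \<in> ?C} = walks_in E v v \<times> ?C"
    by (auto simp: stopped_walks_def)
  ultimately have bij: "bij_betw (\<lambda>(l0, b). l0 @ b) (walks_in E v v \<times> ?C)
      {\<alpha> \<in> stopped_walks E T v. loop_erase \<alpha> = v # \<gamma>}"
    by simp
  have "lerw_weight E T (v # \<gamma>) = (\<Sum>\<^sub>\<infinity>(l0, b)\<in>walks_in E v v \<times> ?C. walk_weight (l0 @ b))"
    unfolding lerw_weight_def list.sel(1) infsum_reindex_bij_betw[OF bij, symmetric]
    by (simp add: case_prod_unfold)
  also have "\<dots> = green E v v * (\<Sum>\<^sub>\<infinity>b\<in>?C. ennreal (P v (hd \<gamma>)) * walk_weight b)"
  proof -
    have "(\<Sum>\<^sub>\<infinity>b\<in>?C. ennreal (P v (hd b)) * walk_weight b) = (\<Sum>\<^sub>\<infinity>b\<in>?C. ennreal (P v (hd \<gamma>)) * walk_weight b)"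
      by (rule infsum_cong) (simp add: stopped_walks_def)
    then show ?thesis by (subst infsum_walks_in_append) (auto simp: stopped_walks_def)
  qed
  finally show ?thesis
    by (simp add: ennreal_infsum_cmult_right lerw_weight_def mult.assoc)
qed

lemma lerw_weight_eq:
  assumes "E \<inter> T = {}" "\<gamma> \<noteq> []" "last \<gamma> \<in> T"
  shows "lerw_weight E T \<gamma> = walk_weight \<gamma> * green_prod E (butlast \<gamma>)"
  using assms
proof (induction \<gamma> arbitrary: E)
  case (Cons v \<gamma>)
  show ?case
  proof (cases "\<gamma> = []")
    case True
    then have "v \<in> T" using Cons.prems by simp
    then have "{\<alpha> \<in> stopped_walks E T v. loop_erase \<alpha> = [v]} = {[v]}"
      using stopped_walks_start_in_target[OF Cons.prems(1)] by (auto simp: loop_erase_def loop_erase_step_def)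
    then show ?thesis using True by (simp add: lerw_weight_def)
  next
    case False
    have "lerw_weight (E - {v}) T \<gamma> = walk_weight \<gamma> * green_prod (E - {v}) (butlast \<gamma>)"
      using Cons.IH[of "E - {v}"] Cons.prems False by auto
    then have "lerw_weight E T (v # \<gamma>) =
        green E v v * ennreal (P v (hd \<gamma>)) * (walk_weight \<gamma> * green_prod (E - {v}) (butlast \<gamma>))"
      using lerw_weight_Cons[OF Cons.prems(1) False] by simp
    also have "\<dots> = walk_weight (v # \<gamma>) * green_prod E (butlast (v # \<gamma>))"
      using False by (simp add: walk_weight_Cons mult_ac)
    finally show ?thesis .
  qed
qed simp

definition simple_walks :: "'a set \<Rightarrow> 'a set \<Rightarrow> 'a \<Rightarrow> 'a list set" where
  "simple_walks E T a = {\<gamma> \<in> stopped_walks E T a. distinct \<gamma>}"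

lemma loop_erase_stopped_walk:
  assumes "\<alpha> \<in> stopped_walks E T a"
  shows "loop_erase \<alpha> \<in> simple_walks E T a"
proof -
  have \<alpha>: "\<alpha> \<noteq> []" "hd \<alpha> = a" "last \<alpha> \<in> T" "set (butlast \<alpha>) \<subseteq> E"
    using assms by (auto simp: stopped_walks_def)
  have "x \<in> set (butlast \<alpha>)" if "x \<in> set (butlast (loop_erase \<alpha>))" for x
  proof -
    have "x \<noteq> last (loop_erase \<alpha>)"
      using that distinct_last_notin_butlast[OF distinct_loop_erase loop_erase_ends(1)[OF \<alpha>(1)]]
      by metis
    moreover have "x \<in> set \<alpha>" using that set_loop_erase in_set_butlastD by fast
    ultimately show ?thesis using loop_erase_ends[OF \<alpha>(1)] set_butlast_last[OF \<alpha>(1)] by auto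
  qed
  then show ?thesis
    using \<alpha> loop_erase_ends[OF \<alpha>(1)] distinct_loop_erase[of \<alpha>]
    by (auto simp: simple_walks_def stopped_walks_def)
qed

lemma infsum_loop_erase:
  "(\<Sum>\<^sub>\<infinity>\<alpha>\<in>stopped_walks E T a. walk_weight \<alpha> * f (loop_erase \<alpha>)) =
   (\<Sum>\<^sub>\<infinity>\<gamma>\<in>simple_walks E T a. f \<gamma> * lerw_weight E T \<gamma>)"
proof -
  let ?fibre = "\<lambda>\<gamma>. {\<alpha> \<in> stopped_walks E T (hd \<gamma>). loop_erase \<alpha> = \<gamma>}"
  have bij: "bij_betw snd (Sigma (simple_walks E T a) ?fibre) (stopped_walks E T a)"
  proof (rule bij_betw_imageI)
    show "inj_on snd (Sigma (simple_walks E T a) ?fibre)" by (rule inj_onI) auto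
    show "snd ` Sigma (simple_walks E T a) ?fibre = stopped_walks E T a"
    proof (intro equalityI subsetI)
      fix \<alpha> assume "\<alpha> \<in> snd ` Sigma (simple_walks E T a) ?fibre"
      then show "\<alpha> \<in> stopped_walks E T a" by (auto simp: simple_walks_def stopped_walks_def)
    next
      fix \<alpha> assume \<alpha>: "\<alpha> \<in> stopped_walks E T a"
      then have "loop_erase \<alpha> \<in> simple_walks E T a" by (rule loop_erase_stopped_walk)
      then show "\<alpha> \<in> snd ` Sigma (simple_walks E T a) ?fibre"
        using \<alpha> by (intro image_eqI[where x="(loop_erase \<alpha>, \<alpha>)"]) (auto simp: simple_walks_def stopped_walks_def)
    qed
  qed
  have "(\<Sum>\<^sub>\<infinity>\<alpha>\<in>stopped_walks E T a. walk_weight \<alpha> * f (loop_erase \<alpha>)) =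
      (\<Sum>\<^sub>\<infinity>x\<in>Sigma (simple_walks E T a) ?fibre. walk_weight (snd x) * f (loop_erase (snd x)))"
    using infsum_reindex_bij_betw[OF bij, of "\<lambda>\<alpha>. walk_weight \<alpha> * f (loop_erase \<alpha>)"] by simp
  also have "\<dots> = (\<Sum>\<^sub>\<infinity>\<gamma>\<in>simple_walks E T a. \<Sum>\<^sub>\<infinity>\<alpha>\<in>?fibre \<gamma>.
      walk_weight (snd (\<gamma>, \<alpha>)) * f (loop_erase (snd (\<gamma>, \<alpha>))))"
    by (rule ennreal_infsum_Sigma[where f="\<lambda>x. walk_weight (snd x) * f (loop_erase (snd x))"])
  also have "\<dots> = (\<Sum>\<^sub>\<infinity>\<gamma>\<in>simple_walks E T a. f \<gamma> * lerw_weight E T \<gamma>)"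
  proof (rule infsum_cong)
    fix \<gamma>
    have "(\<Sum>\<^sub>\<infinity>\<alpha>\<in>?fibre \<gamma>. walk_weight (snd (\<gamma>, \<alpha>)) * f (loop_erase (snd (\<gamma>, \<alpha>)))) =
        (\<Sum>\<^sub>\<infinity>\<alpha>\<in>?fibre \<gamma>. f \<gamma> * walk_weight \<alpha>)"
      by (rule infsum_cong) (simp add: mult.commute)
    then show "(\<Sum>\<^sub>\<infinity>\<alpha>\<in>?fibre \<gamma>. walk_weight (snd (\<gamma>, \<alpha>)) * f (loop_erase (snd (\<gamma>, \<alpha>)))) =
        f \<gamma> * lerw_weight E T \<gamma>"
      by (simp add: lerw_weight_def ennreal_infsum_cmult_right)
  qed
  finally show ?thesis .
qed

end

context absorbed_walk
begin

text \<open>Decomposing at the last visit to a: the walk leaves E almost surely, so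
  \<open>1 = G(a,a)\<close> times the probability of leaving E without returning to a.\<close>

lemma green_diag_finite:
  assumes "E \<subseteq> V - W"
  shows "green E a a < \<infinity>"
proof (cases "a \<in> E")
  case False
  then show ?thesis by (simp add: green_eq_0_if_notin)
next
  case True
  let ?B = "{b. b \<noteq> [] \<and> last b \<in> V - E \<and> set (butlast b) \<subseteq> E - {a}}"
  let ?exit = "\<Sum>\<^sub>\<infinity>b\<in>?B. ennreal (P a (hd b)) * walk_weight b"
  have ET: "E \<inter> (V - E) = {}" "E \<union> (V - E) = V" "W \<subseteq> V - E" using assms W_subset by auto
  have "1 = exit_prob E (V - E) a"
    using exit_prob_eq_1[OF ET] True assms by auto
  also have "\<dots> = (\<Sum>\<^sub>\<infinity>(l0, b)\<in>walks_in E a a \<times> ?B. walk_weight (l0 @ b))"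
    unfolding exit_prob_def infsum_reindex_bij_betw[OF last_visit_bij[OF ET(1) True], symmetric]
    by (simp add: case_prod_unfold)
  also have "\<dots> = green E a a * ?exit"
    by (rule infsum_walks_in_append) simp
  finally have exit: "green E a a * ?exit = 1" by simp
  show ?thesis
  proof (rule ccontr)
    assume "\<not> green E a a < \<infinity>"
    then have "green E a a = \<infinity>" by (simp add: less_top[symmetric])
    with exit show False by (cases "?exit = 0") (simp_all add: ennreal_mult_top)
  qed
qed

lemma green_finite:
  assumes "E \<subseteq> V - W"
  shows "green E b a < \<infinity>"
proof -
  have "green E b a = hit_prob E b a * green E a a" by (rule green_eq_hit_prob_mult)
  also have "\<dots> \<le> green E a a"
    using mult_right_mono[OF hit_prob_le_1[of E b a] zero_le, of "green E a a"] by simp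
  also have "\<dots> < \<infinity>" using green_diag_finite[OF assms] .
  finally show ?thesis .
qed

text \<open>Both sides equal \<open>G(a,a) G(b,b) - G(a,b) G(b,a)\<close> for the Green's function G on E.
  It makes the weights of pairs of loop-erased walks invariant under the swap defined below.\<close>

lemma green_diag_remove_commute:
  assumes "E \<subseteq> V - W"
  shows "green E a a * green (E - {a}) b b = green E b b * green (E - {b}) a a"
proof -
  have ab: "green E a a * green E b b = green E a a * green (E - {a}) b b + green E b a * green E a b"
    using green_diag_remove[of E b a] green_eq_hit_prob_mult[of E b a] by (simp add: distrib_left mult_ac)
  have ba: "green E b b * green E a a = green E b b * green (E - {b}) a a + green E a b * green E b a"
    using green_diag_remove[of E a b] green_eq_hit_prob_mult[of E a b] by (simp add: distrib_left mult_ac)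
  have "green E b a * green E a b \<noteq> \<infinity>"
    using green_finite[OF assms] by (simp add: ennreal_mult_eq_top_iff less_top[symmetric])
  then show ?thesis
    using ab ba by (metis add.commute ennreal_add_left_cancel mult.commute)
qed

lemma green_prod_swap:
  assumes "E \<subseteq> V - W"
  shows "green_prod E (a # b # s) = green_prod E (b # a # s)"
proof -
  have "E - {a} - {b} = E - {b} - {a}" by auto
  then show ?thesis using green_diag_remove_commute[OF assms, of a b] by (simp add: mult.assoc[symmetric])
qed

lemma green_prod_remove1:
  "E \<subseteq> V - W \<Longrightarrow> u \<in> set s \<Longrightarrow> green_prod E s = green_prod E (u # remove1 u s)"
proof (induction s arbitrary: E)
  case (Cons x s)
  show ?case
  proof (cases "x = u")
    case False
    have "green_prod (E - {x}) s = green_prod (E - {x}) (u # remove1 u s)"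
      using Cons.prems False by (intro Cons.IH) auto
    then have "green_prod E (x # s) = green_prod E (x # u # remove1 u s)" by simp
    also have "\<dots> = green_prod E (u # x # remove1 u s)"
      by (rule green_prod_swap[OF Cons.prems(1)])
    finally show ?thesis using False by simp
  qed simp
qed simp

lemma green_prod_perm: "E \<subseteq> V - W \<Longrightarrow> mset s = mset s' \<Longrightarrow> green_prod E s = green_prod E s'"
proof (induction s' arbitrary: s E)
  case (Cons u r)
  then have "u \<in> set s" by (metis list.set_intros(1) set_mset_mset)
  then have "green_prod E s = green E u u * green_prod (E - {u}) (remove1 u s)"
    using green_prod_remove1[OF Cons.prems(1)] by simp
  also have "green_prod (E - {u}) (remove1 u s) = green_prod (E - {u}) r"
    using Cons.prems by (intro Cons.IH) (auto simp: mset_remove1)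
  finally show ?case by simp
qed simp

lemma exit_prob_eq_1_simple_walk:
  assumes "\<gamma> \<in> simple_walks (V - W) W a" "b \<in> V"
  shows "exit_prob (V - W - set \<gamma>) (W \<union> set \<gamma>) b = 1"
proof (rule exit_prob_eq_1)
  have "set \<gamma> \<subseteq> V"
    using assms(1) W_subset set_butlast_last[of \<gamma>] by (auto simp: simple_walks_def stopped_walks_def)
  then show "V - W - set \<gamma> \<union> (W \<union> set \<gamma>) = V" using W_subset by auto
qed (use assms(2) in auto)

lemma infsum_lerw_weight: "a \<in> V \<Longrightarrow> (\<Sum>\<^sub>\<infinity>\<gamma>\<in>simple_walks (V - W) W a. lerw_weight (V - W) W \<gamma>) = 1"
  using infsum_loop_erase[where f="\<lambda>_. 1" and E="V - W" and T=W and a=a]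
    exit_prob_eq_1[of "V - W" W a] W_subset
  by (simp add: exit_prob_def Un_absorb2 Int_commute)

definition lerw_pairs :: "'a \<Rightarrow> 'a \<Rightarrow> ('a list \<times> 'a list) set" where
  "lerw_pairs a b = (SIGMA \<gamma>:simple_walks (V - W) W a. simple_walks (V - W - set \<gamma>) (W \<union> set \<gamma>) b)"

fun pair_weight :: "'a list \<times> 'a list \<Rightarrow> ennreal" where
  "pair_weight (\<gamma>, \<eta>) = walk_weight \<gamma> * walk_weight \<eta> * green_prod (V - W) (butlast \<gamma> @ butlast \<eta>)"

lemma pair_weight_eq_lerw_weight:
  assumes "(\<gamma>, \<eta>) \<in> lerw_pairs a b"
  shows "pair_weight (\<gamma>, \<eta>) = lerw_weight (V - W) W \<gamma> * lerw_weight (V - W - set \<gamma>) (W \<union> set \<gamma>) \<eta>"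
proof -
  have \<gamma>: "\<gamma> \<noteq> []" "last \<gamma> \<in> W" and \<eta>: "\<eta> \<noteq> []" "last \<eta> \<in> W \<union> set \<gamma>"
    using assms by (auto simp: lerw_pairs_def simple_walks_def stopped_walks_def)
  have "V - W - set (butlast \<gamma>) = V - W - set \<gamma>"
    using \<gamma> set_butlast_last[OF \<gamma>(1)] by auto
  moreover have "(V - W) \<inter> W = {}" "(V - W - set \<gamma>) \<inter> (W \<union> set \<gamma>) = {}" by auto
  ultimately show ?thesis
    using lerw_weight_eq[of "V - W" W \<gamma>] lerw_weight_eq[of "V - W - set \<gamma>" "W \<union> set \<gamma>" \<eta>] \<gamma> \<eta>
    by (simp add: green_prod_append mult_ac)
qed

lemma infsum_lerw_pairs:
  "(\<Sum>\<^sub>\<infinity>z\<in>lerw_pairs a b. pair_weight z * f z) =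
   (\<Sum>\<^sub>\<infinity>\<gamma>\<in>simple_walks (V - W) W a. lerw_weight (V - W) W \<gamma> *
      (\<Sum>\<^sub>\<infinity>\<alpha>\<in>stopped_walks (V - W - set \<gamma>) (W \<union> set \<gamma>) b. walk_weight \<alpha> * f (\<gamma>, loop_erase \<alpha>)))"
proof -
  have "(\<Sum>\<^sub>\<infinity>z\<in>lerw_pairs a b. pair_weight z * f z) =
      (\<Sum>\<^sub>\<infinity>\<gamma>\<in>simple_walks (V - W) W a. \<Sum>\<^sub>\<infinity>\<eta>\<in>simple_walks (V - W - set \<gamma>) (W \<union> set \<gamma>) b.
        pair_weight (\<gamma>, \<eta>) * f (\<gamma>, \<eta>))"
    unfolding lerw_pairs_def by (rule ennreal_infsum_Sigma[where f="\<lambda>z. pair_weight z * f z"])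
  also have "\<dots> = (\<Sum>\<^sub>\<infinity>\<gamma>\<in>simple_walks (V - W) W a. lerw_weight (V - W) W \<gamma> *
      (\<Sum>\<^sub>\<infinity>\<alpha>\<in>stopped_walks (V - W - set \<gamma>) (W \<union> set \<gamma>) b. walk_weight \<alpha> * f (\<gamma>, loop_erase \<alpha>)))"
  proof (rule infsum_cong)
    fix \<gamma> assume \<gamma>: "\<gamma> \<in> simple_walks (V - W) W a"
    let ?S = "simple_walks (V - W - set \<gamma>) (W \<union> set \<gamma>) b"
    have "(\<Sum>\<^sub>\<infinity>\<eta>\<in>?S. pair_weight (\<gamma>, \<eta>) * f (\<gamma>, \<eta>)) =
        (\<Sum>\<^sub>\<infinity>\<eta>\<in>?S. lerw_weight (V - W) W \<gamma> * (f (\<gamma>, \<eta>) * lerw_weight (V - W - set \<gamma>) (W \<union> set \<gamma>) \<eta>))"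
      using \<gamma> pair_weight_eq_lerw_weight
      by (intro infsum_cong) (simp add: lerw_pairs_def mult_ac del: pair_weight.simps)
    also have "\<dots> = lerw_weight (V - W) W \<gamma> *
        (\<Sum>\<^sub>\<infinity>\<alpha>\<in>stopped_walks (V - W - set \<gamma>) (W \<union> set \<gamma>) b. walk_weight \<alpha> * f (\<gamma>, loop_erase \<alpha>))"
      by (simp add: ennreal_infsum_cmult_right infsum_loop_erase[where f="\<lambda>\<eta>. f (\<gamma>, \<eta>)"])
    finally show "(\<Sum>\<^sub>\<infinity>\<eta>\<in>?S. pair_weight (\<gamma>, \<eta>) * f (\<gamma>, \<eta>)) = \<dots>" .
  qed
  finally show ?thesis .
qed

definition hit_mass :: "'a \<Rightarrow> 'a set \<Rightarrow> ennreal" where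
  "hit_mass a A = (\<Sum>\<^sub>\<infinity>\<beta>\<in>stopped_walks (V - W) W a. walk_weight \<beta> * of_bool (last \<beta> \<in> A))"

definition nondisconnect_mass :: "'a \<Rightarrow> 'a \<Rightarrow> ennreal" where
  "nondisconnect_mass x y =
     infsum walk_weight {\<alpha> \<in> stopped_walks (V - W) W x. \<not> disconnects c (set \<alpha>) y W}"

lemma hit_mass_eq_lerw_pairs:
  assumes "b \<in> V"
  shows "hit_mass a A = (\<Sum>\<^sub>\<infinity>z\<in>lerw_pairs a b. pair_weight z * of_bool (last (fst z) \<in> A))"
proof -
  have "(\<Sum>\<^sub>\<infinity>z\<in>lerw_pairs a b. pair_weight z * of_bool (last (fst z) \<in> A)) =
      (\<Sum>\<^sub>\<infinity>\<gamma>\<in>simple_walks (V - W) W a. lerw_weight (V - W) W \<gamma> *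
        (exit_prob (V - W - set \<gamma>) (W \<union> set \<gamma>) b * of_bool (last \<gamma> \<in> A)))"
    by (simp add: infsum_lerw_pairs exit_prob_def ennreal_infsum_cmult_left)
  also have "\<dots> = (\<Sum>\<^sub>\<infinity>\<gamma>\<in>simple_walks (V - W) W a. of_bool (last \<gamma> \<in> A) * lerw_weight (V - W) W \<gamma>)"
    using exit_prob_eq_1_simple_walk[OF _ assms] by (intro infsum_cong) (simp add: mult.commute)
  also have "\<dots> = hit_mass a A"
    unfolding hit_mass_def infsum_loop_erase[where f="\<lambda>\<gamma>. of_bool (last \<gamma> \<in> A)", symmetric]
    by (intro infsum_cong) (simp add: stopped_walks_def loop_erase_ends)
  finally show ?thesis ..
qed

lemma infsum_avoiding_le_nondisconnect_mass:
  assumes "\<gamma> \<in> simple_walks (V - W) W y" "lerw_weight (V - W) W \<gamma> \<noteq> 0"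
  shows "(\<Sum>\<^sub>\<infinity>\<alpha>\<in>stopped_walks (V - W - set \<gamma>) (W \<union> set \<gamma>) x.
      walk_weight \<alpha> * of_bool (last (loop_erase \<alpha>) \<notin> set \<gamma>)) \<le> nondisconnect_mass x y"
proof -
  have \<gamma>: "\<gamma> \<noteq> []" "hd \<gamma> = y" "last \<gamma> \<in> W"
    using assms(1) by (auto simp: simple_walks_def stopped_walks_def)
  moreover have "(V - W) \<inter> W = {}" by auto
  ultimately have "graph_path c \<gamma>"
    using assms(2) graph_path_if_walk_weight lerw_weight_eq[of "V - W" W \<gamma>] by auto
  then have "\<not> disconnects c (set \<alpha>) y W" if "set \<alpha> \<inter> set \<gamma> = {}" for \<alpha>
    using that \<gamma> by (auto simp: disconnects_def)
  moreover have "set \<alpha> \<inter> set \<gamma> = {}"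
    if "\<alpha> \<in> stopped_walks (V - W - set \<gamma>) (W \<union> set \<gamma>) x" "last \<alpha> \<notin> set \<gamma>" for \<alpha>
    using that set_butlast_last[of \<alpha>] by (auto simp: stopped_walks_def)
  ultimately have "{\<alpha> \<in> stopped_walks (V - W - set \<gamma>) (W \<union> set \<gamma>) x. last \<alpha> \<notin> set \<gamma>} \<subseteq>
      {\<alpha> \<in> stopped_walks (V - W) W x. \<not> disconnects c (set \<alpha>) y W}"
    by (auto simp: stopped_walks_def)
  then have "infsum walk_weight {\<alpha> \<in> stopped_walks (V - W - set \<gamma>) (W \<union> set \<gamma>) x. last \<alpha> \<notin> set \<gamma>}
      \<le> nondisconnect_mass x y"
    unfolding nondisconnect_mass_def by (rule ennreal_infsum_mono_set)
  moreover have "(\<Sum>\<^sub>\<infinity>\<alpha>\<in>stopped_walks (V - W - set \<gamma>) (W \<union> set \<gamma>) x.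
      walk_weight \<alpha> * of_bool (last (loop_erase \<alpha>) \<notin> set \<gamma>)) =
      infsum walk_weight {\<alpha> \<in> stopped_walks (V - W - set \<gamma>) (W \<union> set \<gamma>) x. last \<alpha> \<notin> set \<gamma>}"
    by (rule infsum_cong_neutral) (auto simp: stopped_walks_def loop_erase_ends)
  ultimately show ?thesis by simp
qed

lemma lerw_pairs_miss_le_nondisconnect_mass:
  assumes "y \<in> V"
  shows "(\<Sum>\<^sub>\<infinity>z\<in>lerw_pairs y x. pair_weight z * of_bool (last (snd z) \<notin> set (fst z)))
    \<le> nondisconnect_mass x y"
proof -
  have "(\<Sum>\<^sub>\<infinity>z\<in>lerw_pairs y x. pair_weight z * of_bool (last (snd z) \<notin> set (fst z))) \<le>
      (\<Sum>\<^sub>\<infinity>\<gamma>\<in>simple_walks (V - W) W y. lerw_weight (V - W) W \<gamma> * nondisconnect_mass x y)"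
    unfolding infsum_lerw_pairs
  proof (rule infsum_mono[OF ennreal_summable_on ennreal_summable_on])
    fix \<gamma> assume "\<gamma> \<in> simple_walks (V - W) W y"
    then show "lerw_weight (V - W) W \<gamma> * (\<Sum>\<^sub>\<infinity>\<alpha>\<in>stopped_walks (V - W - set \<gamma>) (W \<union> set \<gamma>) x.
        walk_weight \<alpha> * of_bool (last (snd (\<gamma>, loop_erase \<alpha>)) \<notin> set (fst (\<gamma>, loop_erase \<alpha>))))
      \<le> lerw_weight (V - W) W \<gamma> * nondisconnect_mass x y"
      using infsum_avoiding_le_nondisconnect_mass
      by (cases "lerw_weight (V - W) W \<gamma> = 0") (auto intro: mult_left_mono)
  qed
  also have "\<dots> = nondisconnect_mass x y"
    using infsum_lerw_weight[OF assms] by (simp add: ennreal_infsum_cmult_left)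
  finally show ?thesis .
qed

text \<open>If \<open>\<eta>\<close> ends at the vertex v of \<open>\<gamma> = p @ v # r\<close>, the swapped pair is \<open>\<eta>\<close> continued
  along the rest r of \<open>\<gamma>\<close>, together with \<open>\<gamma>\<close> cut at v; its weight consists of the same
  factors, reordered.\<close>

definition swap_pair :: "'a list \<times> 'a list \<Rightarrow> 'a list \<times> 'a list" where
  "swap_pair = (\<lambda>(\<gamma>, \<eta>). if last \<eta> \<in> set \<gamma>
     then (\<eta> @ tl (dropWhile (\<lambda>u. u \<noteq> last \<eta>) \<gamma>), takeWhile (\<lambda>u. u \<noteq> last \<eta>) \<gamma> @ [last \<eta>])
     else (\<eta>, \<gamma>))"

lemma swap_pair_meet:
  assumes "v \<notin> set p" "last \<eta> = v"
  shows "swap_pair (p @ v # r, \<eta>) = (\<eta> @ r, p @ [v])"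
proof -
  have "\<forall>u\<in>set p. u \<noteq> v" using assms(1) by auto
  then show ?thesis using assms(2) by (simp add: swap_pair_def)
qed

lemma swap_pair_disjoint: "last \<eta> \<notin> set \<gamma> \<Longrightarrow> swap_pair (\<gamma>, \<eta>) = (\<eta>, \<gamma>)"
  by (simp add: swap_pair_def)

lemma last_fst_swap_pair: "last \<eta> \<in> set \<gamma> \<Longrightarrow> last (fst (swap_pair (\<gamma>, \<eta>))) = last \<gamma>"
  by (metis split_list_first swap_pair_meet fst_conv last_ConsL last_ConsR last_appendR last_snoc
      append_Nil2 list.distinct(1))

lemma swap_pair_meet_lerw_pairs:
  assumes z: "(p @ v # r, e @ [v]) \<in> lerw_pairs a b" and "v \<notin> set p"
  shows "(e @ v # r, p @ [v]) \<in> lerw_pairs b a"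
    and "pair_weight (e @ v # r, p @ [v]) = pair_weight (p @ v # r, e @ [v])"
proof -
  have \<gamma>: "distinct (p @ v # r)" "hd (p @ v # r) = a" "last (v # r) \<in> W"
      "set p \<subseteq> V - W" "set (butlast (v # r)) \<subseteq> V - W"
    and \<eta>: "distinct (e @ [v])" "hd (e @ [v]) = b" "set e \<subseteq> V - W - set (p @ v # r)"
    using z by (auto simp: lerw_pairs_def simple_walks_def stopped_walks_def butlast_append)
  show "(e @ v # r, p @ [v]) \<in> lerw_pairs b a"
    using \<gamma> \<eta> by (cases e; cases p)
      (auto simp: lerw_pairs_def simple_walks_def stopped_walks_def butlast_append dest: in_set_butlastD)
  have "walk_weight (e @ v # r) = walk_weight (e @ [v]) * walk_weight (v # r)"
    "walk_weight (p @ v # r) = walk_weight (p @ [v]) * walk_weight (v # r)"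
    using walk_weight_join[of "e @ [v]" "v # r"] walk_weight_join[of "p @ [v]" "v # r"] by simp_all
  moreover have "green_prod (V - W) (e @ butlast (v # r) @ p) = green_prod (V - W) (p @ butlast (v # r) @ e)"
    by (rule green_prod_perm) auto
  ultimately show "pair_weight (e @ v # r, p @ [v]) = pair_weight (p @ v # r, e @ [v])"
    by (simp add: butlast_append mult_ac)
qed

lemma swap_pair_disjoint_lerw_pairs:
  assumes z: "(\<gamma>, \<eta>) \<in> lerw_pairs a b" and "last \<eta> \<notin> set \<gamma>"
  shows "(\<eta>, \<gamma>) \<in> lerw_pairs b a" and "set \<gamma> \<inter> set \<eta> = {}"
proof -
  have \<gamma>: "\<gamma> \<in> simple_walks (V - W) W a" and \<eta>: "\<eta> \<noteq> []" "hd \<eta> = b" "distinct \<eta>"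
    "last \<eta> \<in> W \<union> set \<gamma>" "set (butlast \<eta>) \<subseteq> V - W - set \<gamma>"
    using z by (auto simp: lerw_pairs_def simple_walks_def stopped_walks_def)
  show disjoint: "set \<gamma> \<inter> set \<eta> = {}"
    using \<eta> assms(2) set_butlast_last[OF \<eta>(1)] by auto
  then show "(\<eta>, \<gamma>) \<in> lerw_pairs b a"
    using \<gamma> \<eta> assms(2)
    by (auto simp: lerw_pairs_def simple_walks_def stopped_walks_def dest: in_set_butlastD)
qed

lemma swap_pair_lerw_pairs:
  assumes "z \<in> lerw_pairs a b"
  shows "swap_pair z \<in> lerw_pairs b a" "swap_pair (swap_pair z) = z" "pair_weight (swap_pair z) = pair_weight z"
proof -
  obtain \<gamma> e v where z: "z = (\<gamma>, e @ [v])" and "v \<notin> set e"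
    using assms by (cases z rule: prod.exhaust, cases "snd z" rule: rev_cases)
      (auto simp: lerw_pairs_def simple_walks_def stopped_walks_def)
  consider (meet) "v \<in> set \<gamma>" | (disjoint) "v \<notin> set \<gamma>" by blast
  then have "swap_pair z \<in> lerw_pairs b a \<and> swap_pair (swap_pair z) = z \<and> pair_weight (swap_pair z) = pair_weight z"
  proof cases
    case meet
    then obtain p r where \<gamma>: "\<gamma> = p @ v # r" "v \<notin> set p"
      using split_list_first by metis
    then show ?thesis
      using swap_pair_meet_lerw_pairs[of p v r e] assms z \<open>v \<notin> set e\<close>
      by (simp add: swap_pair_meet)
  next
    case disjoint
    have swapped: "(e @ [v], \<gamma>) \<in> lerw_pairs b a" and "set \<gamma> \<inter> set (e @ [v]) = {}"
      using swap_pair_disjoint_lerw_pairs[of \<gamma> "e @ [v]"] assms z disjoint by auto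
    moreover have "\<gamma> \<noteq> []"
      using assms z by (auto simp: lerw_pairs_def simple_walks_def stopped_walks_def)
    ultimately have "last \<gamma> \<notin> set (e @ [v])" by (meson disjoint_iff last_in_set)
    moreover have "green_prod (V - W) (e @ butlast \<gamma>) = green_prod (V - W) (butlast \<gamma> @ e)"
      by (rule green_prod_perm) auto
    ultimately show ?thesis
      using swapped z disjoint by (simp add: swap_pair_disjoint mult_ac)
  qed
  then show "swap_pair z \<in> lerw_pairs b a" "swap_pair (swap_pair z) = z" "pair_weight (swap_pair z) = pair_weight z"
    by auto
qed

lemma bij_swap_pair: "bij_betw swap_pair (lerw_pairs a b) (lerw_pairs b a)"
  by (rule bij_betw_byWitness[where f'=swap_pair]) (auto simp: swap_pair_lerw_pairs)

lemma hit_mass_le: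
  assumes "x \<in> V" "y \<in> V"
  shows "hit_mass x A \<le> hit_mass y A + nondisconnect_mass x y"
    and "hit_mass y A \<le> hit_mass x A + nondisconnect_mass x y"
proof -
  let ?hit = "\<lambda>z. pair_weight z * of_bool (last (fst z) \<in> A)"
  let ?miss = "\<lambda>z. pair_weight z * of_bool (last (snd z) \<notin> set (fst z))"
  have le: "infsum f (lerw_pairs y x) \<le> infsum g (lerw_pairs y x) + nondisconnect_mass x y"
    if "\<And>z. z \<in> lerw_pairs y x \<Longrightarrow> f z \<le> g z + ?miss z" for f g
  proof -
    have "infsum f (lerw_pairs y x) \<le> infsum (\<lambda>z. g z + ?miss z) (lerw_pairs y x)"
      using that by (intro infsum_mono) auto
    also have "\<dots> = infsum g (lerw_pairs y x) + infsum ?miss (lerw_pairs y x)"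
      by (rule infsum_add) auto
    finally show ?thesis
      using lerw_pairs_miss_le_nondisconnect_mass[OF assms(2)] by (meson add_left_mono order_trans)
  qed
  have swap_hit: "?hit (swap_pair z) \<le> ?hit z + ?miss z" "?hit z \<le> ?hit (swap_pair z) + ?miss z"
    if "z \<in> lerw_pairs y x" for z
    using that last_fst_swap_pair[of "snd z" "fst z"] swap_pair_lerw_pairs[OF that]
    by (cases "last (snd z) \<in> set (fst z)"; simp)+
  have "hit_mass x A = infsum (\<lambda>z. ?hit (swap_pair z)) (lerw_pairs y x)"
    using hit_mass_eq_lerw_pairs[OF assms(2)] infsum_reindex_bij_betw[OF bij_swap_pair, of ?hit] by simp
  moreover have "hit_mass y A = infsum ?hit (lerw_pairs y x)"
    by (rule hit_mass_eq_lerw_pairs[OF assms(1)])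
  ultimately show "hit_mass x A \<le> hit_mass y A + nondisconnect_mass x y"
    and "hit_mass y A \<le> hit_mass x A + nondisconnect_mass x y"
    using le swap_hit by auto
qed

lemma infsum_stopped_trajs:
  "(\<Sum>\<^sub>\<infinity>p\<in>{p \<in> stopped_trajs W x. R p}. ennreal (traj_prob V c p)) =
   infsum walk_weight {p \<in> stopped_walks (V - W) W x. R p}"
proof (rule infsum_cong_neutral)
  fix p assume p: "p \<in> {p \<in> stopped_walks (V - W) W x. R p} - {p \<in> stopped_trajs W x. R p}"
  have "p ! i \<notin> W" if "Suc i < length p" for i
  proof -
    have "butlast p ! i \<in> set (butlast p)" using that by (intro nth_mem) simp
    then show ?thesis using p that by (auto simp: stopped_walks_def nth_butlast)
  qed
  then show "walk_weight p = 0" using p by (auto simp: stopped_walks_def stopped_trajs_def)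
next
  fix p assume p: "p \<in> {p \<in> stopped_trajs W x. R p} - {p \<in> stopped_walks (V - W) W x. R p}"
  then obtain i where i: "i < length p - 1" "p ! i \<notin> V - W"
    by (auto simp: stopped_trajs_def stopped_walks_def subset_iff in_set_conv_nth nth_butlast)
  then have "p ! i \<notin> V" using p by (auto simp: stopped_trajs_def)
  then show "ennreal (traj_prob V c p) = 0"
    using walk_weight_eq_0_if_outside[OF i(1)] by (simp add: walk_weight_def)
qed (simp add: walk_weight_def)

lemma ennreal_hit_law: "ennreal (hit_law V c W x A) = hit_mass x A"
proof -
  have "hit_mass x A = infsum walk_weight {p \<in> stopped_walks (V - W) W x. last p \<in> A}"
    unfolding hit_mass_def by (rule infsum_cong_neutral) auto
  also have "\<dots> \<le> exit_prob (V - W) W x"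
    unfolding exit_prob_def by (rule ennreal_infsum_mono_set) auto
  also have "\<dots> \<le> 1" by (rule exit_prob_le_1) auto
  finally have "hit_mass x A < \<infinity>" by (simp add: le_less_trans)
  moreover have "hit_mass x A = (\<Sum>\<^sub>\<infinity>p\<in>{p \<in> stopped_trajs W x. last p \<in> A}. ennreal (traj_prob V c p))"
    unfolding infsum_stopped_trajs hit_mass_def by (rule infsum_cong_neutral) auto
  ultimately show ?thesis
    unfolding hit_law_def by (simp add: ennreal_infsum traj_prob_nonneg)
qed

lemma ennreal_prob_not_disconnect: "ennreal (prob_not_disconnect V c W x y) = nondisconnect_mass x y"
proof -
  have "nondisconnect_mass x y \<le> exit_prob (V - W) W x"
    unfolding nondisconnect_mass_def exit_prob_def by (rule ennreal_infsum_mono_set) auto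
  also have "\<dots> \<le> 1" by (rule exit_prob_le_1) auto
  finally have "nondisconnect_mass x y < \<infinity>" by (simp add: le_less_trans)
  then show ?thesis
    unfolding prob_not_disconnect_def
    by (simp add: ennreal_infsum traj_prob_nonneg infsum_stopped_trajs nondisconnect_mass_def)
qed

lemma hit_law_diff_le:
  assumes "x \<in> V" "y \<in> V"
  shows "\<bar>hit_law V c W x A - hit_law V c W y A\<bar> \<le> prob_not_disconnect V c W x y"
proof -
  have nonneg: "0 \<le> hit_law V c W x A" "0 \<le> hit_law V c W y A" "0 \<le> prob_not_disconnect V c W x y"
    unfolding hit_law_def prob_not_disconnect_def by (auto intro!: infsum_nonneg simp: traj_prob_nonneg)
  have "hit_law V c W x A \<le> hit_law V c W y A + prob_not_disconnect V c W x y"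
    and "hit_law V c W y A \<le> hit_law V c W x A + prob_not_disconnect V c W x y"
    using hit_mass_le[OF assms, of A] nonneg
    by (simp_all add: ennreal_hit_law[symmetric] ennreal_prob_not_disconnect[symmetric]
        ennreal_plus[symmetric] ennreal_le_iff del: ennreal_plus)
  then show ?thesis by linarith
qed

end

theorem mainTheorem4:
  fixes V W :: "'a set" and c :: "'a \<Rightarrow> 'a \<Rightarrow> real" and x y :: 'a
  assumes "weighted_graph V c" and "connected_graph V c" and "planar_graph V c"
    and "W \<subseteq> V" and "W \<noteq> {}"
    and "x \<in> V - W" and "y \<in> V - W"
  shows "dTV_hit V c W x y \<le> prob_not_disconnect V c W x y"
proof -
  interpret absorbed_walk V c W
    using assms by unfold_locales auto
  show ?thesis
    unfolding dTV_hit_def using assms(6,7) hit_law_diff_le by (intro cSUP_least) auto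
qed

end
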